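(* Let $K$ be an arc of bounded rotation in $\mathbb{C}=\mathbb{R}^2$ and let $z=(z_1,z_2):[0,s(K)]\to\mathbb{R}^2$ be its arc length parameterization. Then $z$ is $\delta$-convex: each component $z_i$ ($i=1,2$) can be written as $z_i=g_i-f_i$ where $g_i,f_i:[0,s(K)]\to\mathbb{R}$ are continuous convex functions.
   Context: An arc is the image of a continuous injective map $[a,b]\to\mathbb{C}$, up to increasing reparameterization. A broken line inscribed in $K$ has the same extremities as $K$ and vertices on $K$ ordered along $K$. The absolute rotation of a broken line is the sum over interior vertices of angles in $[0,\pi]$ between directions of consecutive segments; $|\kappa|(K)$ is the supremum of absolute rotations of inscribed broken lines, and $K$ has bounded rotation if $|\kappa|(K)<\infty$. $s(K)$ is the Euclidean length, and the arc length parameterization satisfies $t_2-t_1=s(K|_{t_1,t_2})$. *)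

theory Defs
  imports "HOL-Analysis.Analysis"
begin

definition is_arc :: "(real \<Rightarrow> complex) \<Rightarrow> real \<Rightarrow> real \<Rightarrow> bool" where
  "is_arc \<gamma> a b \<longleftrightarrow> a < b \<and> continuous_on {a..b} \<gamma> \<and> inj_on \<gamma> {a..b}"

definition inscribed_params :: "real \<Rightarrow> real \<Rightarrow> (nat \<Rightarrow> real) \<Rightarrow> nat \<Rightarrow> bool" where
  "inscribed_params a b t n \<longleftrightarrow> 1 \<le> n \<and> t 0 = a \<and> t n = b \<and> (\<forall>i<n. t i < t (Suc i))"

definition vangle :: "complex \<Rightarrow> complex \<Rightarrow> real" where
  "vangle u v = arccos ((u \<bullet> v) / (norm u * norm v))"

definition broken_line_rotation :: "(real \<Rightarrow> complex) \<Rightarrow> (nat \<Rightarrow> real) \<Rightarrow> nat \<Rightarrow> real" where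
  "broken_line_rotation \<gamma> t n =
     (\<Sum>i\<in>{1..<n}. vangle (\<gamma> (t i) - \<gamma> (t (i - 1))) (\<gamma> (t (Suc i)) - \<gamma> (t i)))"

definition broken_line_length :: "(real \<Rightarrow> complex) \<Rightarrow> (nat \<Rightarrow> real) \<Rightarrow> nat \<Rightarrow> real" where
  "broken_line_length \<gamma> t n = (\<Sum>i<n. cmod (\<gamma> (t (Suc i)) - \<gamma> (t i)))"

definition abs_curvature :: "(real \<Rightarrow> complex) \<Rightarrow> real \<Rightarrow> real \<Rightarrow> ereal" where
  "abs_curvature \<gamma> a b =
     (SUP p \<in> {(t, n). inscribed_params a b t n}. ereal (broken_line_rotation \<gamma> (fst p) (snd p)))"

definition bounded_rotation :: "(real \<Rightarrow> complex) \<Rightarrow> real \<Rightarrow> real \<Rightarrow> bool" where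
  "bounded_rotation \<gamma> a b \<longleftrightarrow> abs_curvature \<gamma> a b < \<infinity>"

definition arc_len :: "(real \<Rightarrow> complex) \<Rightarrow> real \<Rightarrow> real \<Rightarrow> ereal" where
  "arc_len \<gamma> a b =
     (SUP p \<in> {(t, n). inscribed_params a b t n}. ereal (broken_line_length \<gamma> (fst p) (snd p)))"

end

theory Submission
  imports Defs
begin

text \<open>
  A function h on [0, L] is a difference of convex functions as soon as its slope variation, the sum
  of the jumps between consecutive secant slopes over a partition, is bounded independently of the
  partition.  Indeed, the polygonal interpolant of h is an affine function plus hinge functions
  weighted by the slope jumps; adding the majorant with the absolute values of the jumps as weights
  makes it convex.  If the slope variation is at most V, these majorants lie between 0 and V |x| and
  are V-Lipschitz, so they have a cluster point f along refining partitions, and f and h + f are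
  convex.

  For the arc length parametrization z, the secant velocity on a partition interval is the chord
  ratio, which is at most 1, times a unit direction.  The jumps of the unit directions are bounded by
  the turning angles of the inscribed broken line, so they sum to at most the absolute rotation
  of K.  So does the total chord defect (one minus the chord ratio), because an inscribed chain of a
  subarc is almost as long as the subarc while a chain with little turning has a chord almost as
  long as itself.  Hence Re z and Im z have slope variation at most three times the rotation.
\<close>

section \<open>Slope variation and differences of convex functions\<close>

definition partition_of :: "real \<Rightarrow> real \<Rightarrow> real list \<Rightarrow> bool" where
  "partition_of p q xs \<longleftrightarrow> sorted_wrt (<) xs \<and> 2 \<le> length xs \<and> hd xs = p \<and> last xs = q"

lemma partition_of_iff_nth:
  "partition_of p q xs \<longleftrightarrow>
     sorted_wrt (<) xs \<and> 2 \<le> length xs \<and> xs!0 = p \<and> xs!(length xs - 1) = q"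
  by (cases xs) (auto simp: partition_of_def last_conv_nth)

lemma partition_of_nth:
  assumes "partition_of p q xs"
  shows "xs!0 = p" "xs!(length xs - 1) = q"
  using assms by (simp_all add: partition_of_iff_nth)

lemma partition_of_nth_le:
  assumes "partition_of p q xs" "i \<le> j" "j < length xs"
  shows "xs!i \<le> xs!j"
  using assms by (auto simp: partition_of_def intro: sorted_nth_mono strict_sorted_imp_sorted)

lemma partition_of_nth_bounds:
  assumes "partition_of p q xs" "i < length xs"
  shows "p \<le> xs!i" "xs!i \<le> q"
  using partition_of_nth_le[OF assms(1), of 0 i] partition_of_nth_le[OF assms(1), of i "length xs - 1"]
    partition_of_nth[OF assms(1)] assms(2) by auto

lemma partition_of_bounds:
  assumes "partition_of p q xs" "x \<in> set xs"
  shows "p \<le> x \<and> x \<le> q"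
  using assms partition_of_nth_bounds by (metis in_set_conv_nth)

lemma partition_of_sorted_list_of_set:
  assumes B: "finite B" "B \<subseteq> {p..q}" and pq: "p \<in> B" "q \<in> B" "p < q"
  shows "partition_of p q (sorted_list_of_set B)"
proof -
  define xs where "xs = sorted_list_of_set B"
  have set_xs: "set xs = B" and sorted: "sorted xs" and strict: "sorted_wrt (<) xs"
    using B by (simp_all add: xs_def)
  have "2 \<le> card B"
    using card_mono[OF B(1), of "{p, q}"] pq by simp
  then have len: "2 \<le> length xs"
    by (simp add: xs_def)
  obtain i j where "i < length xs" "xs!i = p" "j < length xs" "xs!j = q"
    using pq set_xs by (metis in_set_conv_nth)
  then have "xs!0 \<le> p" "q \<le> xs!(length xs - 1)"
    using sorted_nth_mono[OF sorted] by auto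
  moreover have "xs!0 \<in> {p..q}" "xs!(length xs - 1) \<in> {p..q}"
  proof -
    have "0 < length xs" "length xs - 1 < length xs"
      using len by auto
    then show "xs!0 \<in> {p..q}" "xs!(length xs - 1) \<in> {p..q}"
      using B(2) set_xs nth_mem by blast+
  qed
  ultimately show ?thesis
    using len strict by (auto simp: partition_of_iff_nth xs_def[symmetric])
qed

definition secant_slope :: "(real \<Rightarrow> real) \<Rightarrow> real list \<Rightarrow> nat \<Rightarrow> real" where
  "secant_slope h xs k = (h (xs!Suc k) - h (xs!k)) / (xs!Suc k - xs!k)"

definition slope_jump :: "(real \<Rightarrow> real) \<Rightarrow> real list \<Rightarrow> nat \<Rightarrow> real" where
  "slope_jump h xs k = secant_slope h xs k - secant_slope h xs (k - 1)"

definition slope_variation :: "(real \<Rightarrow> real) \<Rightarrow> real list \<Rightarrow> real" where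
  "slope_variation h xs = (\<Sum>k\<in>{1..<length xs - 1}. \<bar>slope_jump h xs k\<bar>)"

definition polygonal_interpolant :: "(real \<Rightarrow> real) \<Rightarrow> real list \<Rightarrow> real \<Rightarrow> real" where
  "polygonal_interpolant h xs x =
     h (xs!0) + secant_slope h xs 0 * (x - xs!0) +
     (\<Sum>k\<in>{1..<length xs - 1}. slope_jump h xs k * max 0 (x - xs!k))"

definition hinge_majorant :: "(real \<Rightarrow> real) \<Rightarrow> real list \<Rightarrow> real \<Rightarrow> real" where
  "hinge_majorant h xs x = (\<Sum>k\<in>{1..<length xs - 1}. \<bar>slope_jump h xs k\<bar> * max 0 (x - xs!k))"

lemma hinge_increment_at_nodes:
  fixes xs :: "real list"
  assumes xs: "sorted_wrt (<) xs" and j: "Suc j < length xs" and k: "k < length xs"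
  shows "max 0 (xs!Suc j - xs!k) = max 0 (xs!j - xs!k) + (if k \<le> j then xs!Suc j - xs!j else 0)"
proof (cases "k \<le> j")
  case True
  then have "xs!k \<le> xs!j" "xs!j < xs!Suc j"
    using xs j by (auto intro: sorted_nth_mono strict_sorted_imp_sorted sorted_wrt_nth_less)
  then show ?thesis
    using True by simp
next
  case False
  then have "xs!Suc j \<le> xs!k" "xs!j < xs!k"
    using xs k by (auto intro: sorted_nth_mono strict_sorted_imp_sorted sorted_wrt_nth_less)
  then show ?thesis
    using False by simp
qed

lemma polygonal_interpolant_at_node:
  assumes xs: "sorted_wrt (<) xs" and j: "j < length xs"
  shows "polygonal_interpolant h xs (xs!j) = h (xs!j)"
  using j
proof (induction j)
  case 0
  have "xs!0 < xs!k" if "k \<in> {1..<length xs - 1}" for k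
    using that xs by (auto intro: sorted_wrt_nth_less)
  then show ?case
    by (simp add: polygonal_interpolant_def)
next
  case (Suc j)
  define m where "m = length xs - 1"
  define D where "D = xs!Suc j - xs!j"
  have jm: "j < m"
    using Suc.prems by (simp add: m_def)
  have D: "0 < D"
    using xs Suc.prems by (simp add: D_def sorted_wrt_nth_less)
  have hinge: "max 0 (xs!Suc j - xs!k) = max 0 (xs!j - xs!k) + (if k \<le> j then D else 0)"
    if "k \<in> {1..<m}" for k
  proof -
    have "k < length xs"
      using that by (auto simp: m_def)
    then show ?thesis
      using hinge_increment_at_nodes[OF xs Suc.prems, of k] by (simp add: D_def)
  qed
  have "(\<Sum>k\<in>{1..<m}. slope_jump h xs k * max 0 (xs!Suc j - xs!k))
      - (\<Sum>k\<in>{1..<m}. slope_jump h xs k * max 0 (xs!j - xs!k))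
      = (\<Sum>k\<in>{1..<m}. if k \<le> j then slope_jump h xs k * D else 0)"
    unfolding sum_subtractf[symmetric] by (intro sum.cong) (auto simp: hinge distrib_left)
  also have "\<dots> = (\<Sum>k\<in>{1..j}. slope_jump h xs k) * D"
  proof -
    have "{k \<in> {1..<m}. k \<le> j} = {1..j}"
      using jm by auto
    then show ?thesis
      by (simp add: sum.inter_filter[symmetric] sum_distrib_right)
  qed
  also have "(\<Sum>k\<in>{1..j}. slope_jump h xs k) = secant_slope h xs j - secant_slope h xs 0"
    by (induction j) (simp_all add: slope_jump_def)
  finally have "polygonal_interpolant h xs (xs!Suc j) - polygonal_interpolant h xs (xs!j)
      = secant_slope h xs j * D"
    by (simp add: polygonal_interpolant_def D_def m_def algebra_simps)
  also have "\<dots> = h (xs!Suc j) - h (xs!j)"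
    using D by (simp add: secant_slope_def D_def)
  finally show ?case
    using Suc by simp
qed

lemma convex_on_hinge: "convex_on UNIV (\<lambda>x::real. max 0 (x - p))"
proof (rule convex_onI)
  fix t x y :: real
  assume t: "0 < t" "t < 1"
  have eq: "(1 - t) * x + t * y - p = (1 - t) * (x - p) + t * (y - p)"
    by (simp add: algebra_simps)
  have "0 \<le> (1 - t) * max 0 (x - p) + t * max 0 (y - p)"
    using t by simp
  moreover have "(1 - t) * (x - p) + t * (y - p) \<le> (1 - t) * max 0 (x - p) + t * max 0 (y - p)"
    using t by (intro add_mono mult_left_mono) auto
  ultimately show "max 0 ((1 - t) *\<^sub>R x + t *\<^sub>R y - p) \<le> (1 - t) * max 0 (x - p) + t * max 0 (y - p)"
    by (simp add: eq)
qed auto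

lemma convex_on_affine_plus_hinges:
  fixes c p :: "nat \<Rightarrow> real"
  assumes "finite A" "\<And>k. k \<in> A \<Longrightarrow> 0 \<le> c k"
  shows "convex_on UNIV (\<lambda>x. a + b * x + (\<Sum>k\<in>A. c k * max 0 (x - p k)))"
  using assms
proof (induction A rule: finite_induct)
  case empty
  show ?case
    by (rule convex_onI) (auto simp: algebra_simps)
next
  case (insert j A)
  have "convex_on UNIV (\<lambda>x. (a + b * x + (\<Sum>k\<in>A. c k * max 0 (x - p k))) + c j * max 0 (x - p j))"
    using insert by (intro convex_on_add[OF insert.IH] convex_on_cmul convex_on_hinge) auto
  then show ?case
    using insert.hyps by (simp add: algebra_simps)
qed

lemma convex_hinge_majorant: "convex_on UNIV (hinge_majorant h xs)"
  using convex_on_affine_plus_hinges[of "{1..<length xs - 1}" "\<lambda>k. \<bar>slope_jump h xs k\<bar>" 0 0]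
  by (simp add: hinge_majorant_def[abs_def])

lemma convex_interpolant_plus_hinge_majorant:
  "convex_on UNIV (\<lambda>x. polygonal_interpolant h xs x + hinge_majorant h xs x)"
proof -
  let ?c = "\<lambda>k. slope_jump h xs k + \<bar>slope_jump h xs k\<bar>"
  have "polygonal_interpolant h xs x + hinge_majorant h xs x
      = (h (xs!0) - secant_slope h xs 0 * xs!0) + secant_slope h xs 0 * x
        + (\<Sum>k\<in>{1..<length xs - 1}. ?c k * max 0 (x - xs!k))" for x
    by (simp add: polygonal_interpolant_def hinge_majorant_def sum.distrib algebra_simps)
  moreover have "convex_on UNIV (\<lambda>x. (h (xs!0) - secant_slope h xs 0 * xs!0) + secant_slope h xs 0 * x
        + (\<Sum>k\<in>{1..<length xs - 1}. ?c k * max 0 (x - xs!k)))"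
    by (rule convex_on_affine_plus_hinges) auto
  ultimately show ?thesis
    by simp
qed

lemma hinge_majorant_nonneg: "0 \<le> hinge_majorant h xs x"
  unfolding hinge_majorant_def by (intro sum_nonneg) auto

lemma hinge_majorant_le:
  assumes "partition_of 0 L xs"
  shows "hinge_majorant h xs x \<le> slope_variation h xs * \<bar>x\<bar>"
  unfolding hinge_majorant_def slope_variation_def sum_distrib_right
proof (rule sum_mono)
  fix k assume "k \<in> {1..<length xs - 1}"
  then have "0 \<le> xs!k"
    using partition_of_nth_bounds[OF assms, of k] by auto
  then show "\<bar>slope_jump h xs k\<bar> * max 0 (x - xs!k) \<le> \<bar>slope_jump h xs k\<bar> * \<bar>x\<bar>"
    by (intro mult_left_mono) auto
qed

lemma hinge_majorant_diff_le:
  "hinge_majorant h xs x - hinge_majorant h xs y \<le> slope_variation h xs * \<bar>x - y\<bar>"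
  unfolding hinge_majorant_def slope_variation_def sum_distrib_right sum_subtractf[symmetric]
proof (rule sum_mono)
  fix k
  have "max 0 (x - xs!k) - max 0 (y - xs!k) \<le> \<bar>x - y\<bar>"
    by auto
  then show "\<bar>slope_jump h xs k\<bar> * max 0 (x - xs!k) - \<bar>slope_jump h xs k\<bar> * max 0 (y - xs!k)
      \<le> \<bar>slope_jump h xs k\<bar> * \<bar>x - y\<bar>"
    by (metis abs_ge_zero mult_left_mono right_diff_distrib)
qed

definition refining_majorants :: "(real \<Rightarrow> real) \<Rightarrow> real \<Rightarrow> real set \<Rightarrow> (real \<Rightarrow> real) set" where
  "refining_majorants h L A = hinge_majorant h ` {xs. partition_of 0 L xs \<and> A \<subseteq> set xs}"

lemma closure_refining_majorants_subset:
  assumes "closed C" "\<And>xs. partition_of 0 L xs \<Longrightarrow> A \<subseteq> set xs \<Longrightarrow> hinge_majorant h xs \<in> C"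
  shows "closure (refining_majorants h L A) \<subseteq> C"
  using assms unfolding refining_majorants_def by (intro closure_minimal) auto

lemma compact_PiE_intervals: "compact (PiE UNIV (\<lambda>x. {a x..b x}) :: (real \<Rightarrow> real) set)"
proof -
  have "compactin (product_topology (\<lambda>_. euclidean) UNIV) (PiE UNIV (\<lambda>x. {a x..b x}))"
    by (simp add: compactin_PiE)
  then show ?thesis
    by (simp add: euclidean_product_topology)
qed

text \<open>The finite node sets, directed by inclusion, index a net of majorants inside a product of
  compact intervals; by Tychonoff it has a cluster point.\<close>
lemma cluster_point_of_refining_majorants:
  assumes L: "0 < L" and var: "\<And>xs. partition_of 0 L xs \<Longrightarrow> slope_variation h xs \<le> V"
  obtains f where "\<And>A. finite A \<Longrightarrow> A \<subseteq> {0..L} \<Longrightarrow> f \<in> closure (refining_majorants h L A)"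
proof -
  define K where "K = (PiE UNIV (\<lambda>x. {0..V * \<bar>x\<bar>}) :: (real \<Rightarrow> real) set)"
  define \<I> where "\<I> = {A. finite A \<and> A \<subseteq> {0..L}}"
  have majorant_in_K: "hinge_majorant h xs \<in> K" if "partition_of 0 L xs" for xs
  proof -
    have "hinge_majorant h xs x \<le> V * \<bar>x\<bar>" for x
      using hinge_majorant_le[OF that, of h x] var[OF that] by (meson abs_ge_zero mult_right_mono order_trans)
    then show ?thesis
      using hinge_majorant_nonneg by (auto simp: K_def PiE_UNIV_domain)
  qed
  have "K \<inter> (\<Inter>A\<in>\<I>. closure (refining_majorants h L A)) \<noteq> {}"
  proof (rule compact_imp_fip_image)
    show "compact K"
      unfolding K_def by (rule compact_PiE_intervals)
    fix \<I>' assume \<I>': "finite \<I>'" "\<I>' \<subseteq> \<I>"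
    define B where "B = \<Union>\<I>' \<union> {0, L}"
    have B: "finite B" "B \<subseteq> {0..L}"
      using \<I>' L by (auto simp: B_def \<I>_def)
    then have xs: "partition_of 0 L (sorted_list_of_set B)"
      using L by (intro partition_of_sorted_list_of_set) (auto simp: B_def)
    have "hinge_majorant h (sorted_list_of_set B) \<in> closure (refining_majorants h L A)" if "A \<in> \<I>'" for A
    proof -
      have "A \<subseteq> set (sorted_list_of_set B)"
        unfolding set_sorted_list_of_set[OF B(1)] using that by (auto simp: B_def)
      then show ?thesis
        using xs unfolding refining_majorants_def by (intro subsetD[OF closure_subset] imageI) simp
    qed
    then show "K \<inter> (\<Inter>A\<in>\<I>'. closure (refining_majorants h L A)) \<noteq> {}"
      using majorant_in_K[OF xs] by auto
  qed auto
  then show ?thesis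
    using that by (auto simp: \<I>_def)
qed

lemma cluster_point_lipschitz_convex:
  assumes f: "f \<in> closure (refining_majorants h L {})"
    and var: "\<And>xs. partition_of 0 L xs \<Longrightarrow> slope_variation h xs \<le> V" and V: "0 \<le> V"
  shows "V-lipschitz_on UNIV f" "convex_on UNIV f"
proof -
  have diff_le: "f x - f y \<le> V * \<bar>x - y\<bar>" for x y
  proof -
    have "closure (refining_majorants h L {}) \<subseteq> {\<phi>. \<phi> x - \<phi> y \<le> V * \<bar>x - y\<bar>}"
    proof (rule closure_refining_majorants_subset)
      show "closed {\<phi>::real \<Rightarrow> real. \<phi> x - \<phi> y \<le> V * \<bar>x - y\<bar>}"
        by (intro closed_Collect_le continuous_intros continuous_on_product_coordinates)
      fix xs assume "partition_of 0 L xs"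
      then have "slope_variation h xs * \<bar>x - y\<bar> \<le> V * \<bar>x - y\<bar>"
        by (intro mult_right_mono var) auto
      then show "hinge_majorant h xs \<in> {\<phi>. \<phi> x - \<phi> y \<le> V * \<bar>x - y\<bar>}"
        using hinge_majorant_diff_le[of h xs x y] by simp
    qed
    then show ?thesis
      using f by auto
  qed
  show "V-lipschitz_on UNIV f"
  proof (rule lipschitz_onI)
    show "dist (f x) (f y) \<le> V * dist x y" for x y
      using diff_le[of x y] diff_le[of y x] by (simp add: dist_real_def abs_minus_commute)
  qed (rule V)
  show "convex_on UNIV f"
  proof (rule convex_onI)
    fix t x y :: real
    assume t: "0 < t" "t < 1"
    have "closure (refining_majorants h L {}) \<subseteq> {\<phi>. \<phi> ((1 - t) * x + t * y) \<le> (1 - t) * \<phi> x + t * \<phi> y}"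
    proof (rule closure_refining_majorants_subset)
      show "closed {\<phi>::real \<Rightarrow> real. \<phi> ((1 - t) * x + t * y) \<le> (1 - t) * \<phi> x + t * \<phi> y}"
        by (intro closed_Collect_le continuous_intros continuous_on_product_coordinates)
      show "hinge_majorant h xs \<in> {\<phi>. \<phi> ((1 - t) * x + t * y) \<le> (1 - t) * \<phi> x + t * \<phi> y}" for xs
        using convex_onD[OF convex_hinge_majorant, of t x y h xs] t by simp
    qed
    then show "f ((1 - t) *\<^sub>R x + t *\<^sub>R y) \<le> (1 - t) * f x + t * f y"
      using f by auto
  qed simp
qed

lemma cluster_point_plus_convex:
  assumes f: "\<And>A. finite A \<Longrightarrow> A \<subseteq> {0..L} \<Longrightarrow> f \<in> closure (refining_majorants h L A)"
  shows "convex_on {0..L} (\<lambda>x. h x + f x)"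
proof (rule convex_onI)
  fix t x y :: real
  assume t: "0 < t" "t < 1" and xy: "x \<in> {0..L}" "y \<in> {0..L}"
  define w where "w = (1 - t) * x + t * y"
  have "w \<in> {0..L}"
    using convexD[OF convex_real_interval(5) xy, of "1 - t" t] t by (simp add: w_def)
  then have "closure (refining_majorants h L {x, y, w})
      \<subseteq> {\<phi>. h w + \<phi> w \<le> (1 - t) * (h x + \<phi> x) + t * (h y + \<phi> y)}"
  proof (intro closure_refining_majorants_subset)
    show "closed {\<phi>::real \<Rightarrow> real. h w + \<phi> w \<le> (1 - t) * (h x + \<phi> x) + t * (h y + \<phi> y)}"
      by (intro closed_Collect_le continuous_intros continuous_on_product_coordinates)
    fix xs assume xs: "partition_of 0 L xs" "{x, y, w} \<subseteq> set xs"
    have "polygonal_interpolant h xs p = h p" if "p \<in> set xs" for p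
      using that xs(1) polygonal_interpolant_at_node[of xs _ h]
      by (metis in_set_conv_nth partition_of_def)
    then show "hinge_majorant h xs \<in> {\<phi>. h w + \<phi> w \<le> (1 - t) * (h x + \<phi> x) + t * (h y + \<phi> y)}"
      using convex_onD[OF convex_interpolant_plus_hinge_majorant, of t x y h xs] t xs(2)
      by (simp add: w_def)
  qed
  then show "h ((1 - t) *\<^sub>R x + t *\<^sub>R y) + f ((1 - t) *\<^sub>R x + t *\<^sub>R y)
      \<le> (1 - t) * (h x + f x) + t * (h y + f y)"
    using f[of "{x, y, w}"] xy \<open>w \<in> {0..L}\<close> by (auto simp: w_def)
qed simp

theorem delta_convex_if_bounded_slope_variation:
  assumes L: "0 < L" and h: "continuous_on {0..L} h"
    and var: "\<And>xs. partition_of 0 L xs \<Longrightarrow> slope_variation h xs \<le> V"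
  obtains g f where "continuous_on {0..L} g" "convex_on {0..L} g"
    "continuous_on {0..L} f" "convex_on {0..L} f" "\<And>t. h t = g t - f t"
proof -
  have "0 \<le> V"
    using var[of "[0, L]"] L by (simp add: partition_of_def slope_variation_def)
  obtain f where f: "\<And>A. finite A \<Longrightarrow> A \<subseteq> {0..L} \<Longrightarrow> f \<in> closure (refining_majorants h L A)"
    using cluster_point_of_refining_majorants[OF L var] by blast
  have lip: "V-lipschitz_on UNIV f" and conv: "convex_on UNIV f"
    using cluster_point_lipschitz_convex[OF f[of "{}"] var \<open>0 \<le> V\<close>] by auto
  have "continuous_on {0..L} f" "convex_on {0..L} f"
    using lipschitz_on_continuous_on[OF lip] conv by (auto intro: continuous_on_subset convex_on_subset)
  moreover have "continuous_on {0..L} (\<lambda>t. h t + f t)"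
    by (intro continuous_intros h calculation(1))
  ultimately show ?thesis
    using that[of "\<lambda>t. h t + f t" f] cluster_point_plus_convex[OF f] by simp
qed

section \<open>Inscribed chains\<close>

lemma one_minus_cos_le:
  fixes x :: real
  shows "1 - cos x \<le> x\<^sup>2 / 2"
proof -
  have "(sin (x / 2))\<^sup>2 \<le> (x / 2)\<^sup>2"
    using abs_sin_x_le_abs_x[of "x / 2"] by (metis abs_ge_zero power2_abs power_mono)
  then show ?thesis
    using cos_double_sin[of "x / 2"] by (simp add: power_divide)
qed

lemma norm_diff_sq_unit:
  fixes a b :: "'a::real_inner"
  assumes "norm a = 1" "norm b = 1"
  shows "(norm (a - b))\<^sup>2 = 2 - 2 * (a \<bullet> b)"
  using dot_norm_neg[of a b] assms by simp

lemma inner_unit_ge: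
  fixes e e' :: "'a::real_inner"
  assumes "norm e = 1" "norm e' = 1"
  shows "1 - norm (e - e') \<le> e' \<bullet> e"
proof -
  have "norm (e - e') \<le> 2"
    using norm_triangle_ineq4[of e e'] assms by simp
  then have "(norm (e - e'))\<^sup>2 \<le> 2 * norm (e - e')"
    by (simp add: power2_eq_square mult_right_mono)
  then show ?thesis
    using norm_diff_sq_unit[OF assms] by (simp add: inner_commute)
qed

lemma inner_ge_norm_mult:
  fixes w e :: "'a::real_inner"
  assumes "norm e = 1"
  shows "norm w * (1 - norm (e - sgn w)) \<le> w \<bullet> e"
proof (cases "w = 0")
  case False
  have "norm w * (1 - norm (e - sgn w)) \<le> norm w * (sgn w \<bullet> e)"
    using inner_unit_ge[OF assms, of "sgn w"] False by (intro mult_left_mono) (auto simp: norm_sgn)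
  also have "norm w * (sgn w \<bullet> e) = w \<bullet> e"
    using False by (simp add: sgn_div_norm)
  finally show ?thesis .
qed simp

lemma norm_sgn_diff_le_vangle: "norm (sgn v - sgn u) \<le> vangle u v"
proof (cases "u = 0 \<or> v = 0")
  case True
  \<comment> \<open>Then the cosine quotient in vangle is 0 (as x / 0 = 0), so the angle is pi / 2.\<close>
  then have "norm (sgn v - sgn u) \<le> 1"
    by (auto simp: norm_sgn norm_minus_commute)
  then show ?thesis
    using True pi_gt3 by (auto simp: vangle_def)
next
  case False
  define c where "c = (u \<bullet> v) / (norm u * norm v)"
  have "\<bar>u \<bullet> v\<bar> \<le> norm u * norm v"
    by (rule Cauchy_Schwarz_ineq2)
  then have c: "-1 \<le> c" "c \<le> 1"
    using False by (auto simp: c_def abs_le_iff divide_le_eq le_divide_eq)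
  have "sgn v \<bullet> sgn u = c"
    using False by (simp add: c_def sgn_div_norm inner_commute field_simps)
  then have "(norm (sgn v - sgn u))\<^sup>2 = 2 - 2 * c"
    using False by (simp add: norm_diff_sq_unit norm_sgn)
  also have "\<dots> \<le> (arccos c)\<^sup>2"
    using one_minus_cos_le[of "arccos c"] cos_arccos[OF c] by simp
  finally have "norm (sgn v - sgn u) \<le> arccos c"
    using arccos_lbound[OF c] by (rule power2_le_imp_le)
  then show ?thesis
    by (simp add: vangle_def c_def)
qed

fun chain_length :: "complex list \<Rightarrow> real" where
  "chain_length (a # b # r) = cmod (b - a) + chain_length (b # r)"
| "chain_length _ = 0"

text \<open>The distance between consecutive unit directions is a chordal substitute for the turning
  angle at a vertex, which it never exceeds.\<close>
fun chain_turn :: "complex list \<Rightarrow> real" where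
  "chain_turn (a # b # c # r) = cmod (sgn (c - b) - sgn (b - a)) + chain_turn (b # c # r)"
| "chain_turn _ = 0"

lemma chain_length_nonneg: "0 \<le> chain_length ws"
  by (induction ws rule: chain_length.induct) auto

lemma chain_turn_nonneg: "0 \<le> chain_turn ws"
  by (induction ws rule: chain_turn.induct) auto

lemma chain_length_conv_sum: "chain_length ws = (\<Sum>i<length ws - 1. cmod (ws!Suc i - ws!i))"
proof (induction ws rule: chain_length.induct)
  case (1 a b r)
  have "length (a # b # r) - 1 = Suc (length (b # r) - 1)"
    by simp
  then show ?case
    by (simp only: sum.lessThan_Suc_shift) (simp add: 1)
qed auto

lemma chain_turn_conv_sum:
  "chain_turn ws = (\<Sum>i\<in>{1..<length ws - 1}. cmod (sgn (ws!Suc i - ws!i) - sgn (ws!i - ws!(i - 1))))"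
proof -
  have "chain_turn ws = (\<Sum>i<length ws - 2. cmod (sgn (ws!Suc (Suc i) - ws!Suc i) - sgn (ws!Suc i - ws!i)))"
  proof (induction ws rule: chain_turn.induct)
    case (1 a b c r)
    have "length (a # b # c # r) - 2 = Suc (length (b # c # r) - 2)"
      by simp
    then show ?case
      by (simp only: sum.lessThan_Suc_shift) (simp add: 1)
  qed auto
  also have "\<dots> = (\<Sum>i\<in>{1..<length ws - 1}. cmod (sgn (ws!Suc i - ws!i) - sgn (ws!i - ws!(i - 1))))"
  proof (cases "2 \<le> length ws")
    case True
    then have "{1..<length ws - 1} = {Suc 0..<Suc (length ws - 2)}"
      by auto
    then show ?thesis
      by (simp only: sum.shift_bounds_Suc_ivl lessThan_atLeast0) simp
  qed auto
  finally show ?thesis .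
qed

lemma chain_turn_le_broken_line_rotation:
  "chain_turn (map z ps) \<le> broken_line_rotation z (\<lambda>i. ps!i) (length ps - 1)"
  unfolding chain_turn_conv_sum broken_line_rotation_def length_map
proof (rule sum_mono)
  fix i assume "i \<in> {1..<length ps - 1}"
  then have "i - 1 < length ps" "i < length ps" "Suc i < length ps"
    by auto
  then show "cmod (sgn (map z ps ! Suc i - map z ps ! i) - sgn (map z ps ! i - map z ps ! (i - 1)))
      \<le> vangle (z (ps!i) - z (ps!(i - 1))) (z (ps!Suc i) - z (ps!i))"
    using norm_sgn_diff_le_vangle by simp
qed

text \<open>Every segment direction differs from the first one by at most the turning accumulated
  before it, so each segment advances in direction e by nearly its full length.\<close>
lemma chain_inner_ge:
  assumes "norm e = 1"
  shows "chain_length (a # b # r) * (1 - norm (e - sgn (b - a)) - chain_turn (a # b # r))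
    \<le> (last (a # b # r) - a) \<bullet> e"
  using assms
proof (induction r arbitrary: a b)
  case Nil
  then show ?case
    using inner_ge_norm_mult[OF Nil] by simp
next
  case (Cons c r)
  define X where "X = 1 - norm (e - sgn (b - a)) - chain_turn (a # b # c # r)"
  have "norm (e - sgn (c - b)) \<le> norm (e - sgn (b - a)) + norm (sgn (c - b) - sgn (b - a))"
    using norm_triangle_ineq[of "e - sgn (b - a)" "sgn (b - a) - sgn (c - b)"]
    by (simp add: norm_minus_commute)
  then have "chain_length (b # c # r) * X
      \<le> chain_length (b # c # r) * (1 - norm (e - sgn (c - b)) - chain_turn (b # c # r))"
    by (intro mult_left_mono chain_length_nonneg) (simp add: X_def)
  also have "\<dots> \<le> (last (b # c # r) - b) \<bullet> e"
    by (rule Cons.IH[OF Cons.prems])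
  finally have rest: "chain_length (b # c # r) * X \<le> (last (b # c # r) - b) \<bullet> e" .
  have "cmod (b - a) * X \<le> cmod (b - a) * (1 - norm (e - sgn (b - a)))"
    using chain_turn_nonneg[of "a # b # c # r"] by (intro mult_left_mono) (auto simp: X_def)
  also have "\<dots> \<le> (b - a) \<bullet> e"
    by (rule inner_ge_norm_mult[OF Cons.prems])
  finally have "cmod (b - a) * X + chain_length (b # c # r) * X
      \<le> (b - a) \<bullet> e + (last (b # c # r) - b) \<bullet> e"
    using rest by linarith
  then show ?case
    by (simp add: X_def algebra_simps)
qed

lemma chain_length_defect_le_chord:
  assumes "a \<noteq> b"
  shows "chain_length (a # b # r) * (1 - chain_turn (a # b # r)) \<le> cmod (last (a # b # r) - a)"
proof -
  have e: "norm (sgn (b - a)) = 1"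
    using assms by (simp add: norm_sgn)
  have "chain_length (a # b # r) * (1 - chain_turn (a # b # r)) \<le> (last (a # b # r) - a) \<bullet> sgn (b - a)"
    using chain_inner_ge[OF e, of a b r] by simp
  also have "\<dots> \<le> cmod (last (a # b # r) - a)"
    using norm_cauchy_schwarz[of "last (a # b # r) - a" "sgn (b - a)"] e by simp
  finally show ?thesis .
qed

lemma chain_turn_append_ge:
  assumes "xs \<noteq> []"
  shows "chain_turn xs + chain_turn (last xs # ys) \<le> chain_turn (xs @ ys)"
  using assms
proof (induction xs rule: chain_turn.induct)
  case (1 a b c r)
  then show ?case
    by simp
next
  case ("2_2" a)
  then show ?case
    by (cases ys) auto
next
  case ("2_3" a b)
  then show ?case
    by (cases ys) (auto simp: chain_turn_nonneg)
qed simp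

lemma partition_of_append_tl:
  assumes ys: "partition_of p q ys" and zs: "partition_of q r zs"
  shows "partition_of p r (ys @ tl zs)"
proof -
  obtain b zs' where zs_eq: "zs = q # b # zs'"
    using zs unfolding partition_of_def by (metis Suc_le_length_iff list.sel(1) numeral_2_eq_2)
  have "x < y" if "x \<in> set ys" "y \<in> set (b # zs')" for x y
    using partition_of_bounds[OF ys that(1)] zs that(2) by (auto simp: partition_of_def zs_eq)
  moreover have "ys \<noteq> []"
    using ys by (auto simp: partition_of_def)
  ultimately show ?thesis
    using ys zs by (auto simp: partition_of_def zs_eq sorted_wrt_append)
qed

lemma chain_turn_concat_partitions:
  assumes "k < m" and ps: "\<And>k. k < m \<Longrightarrow> partition_of (xs!k) (xs!Suc k) (ps k)"
  shows "\<exists>ys. partition_of (xs!0) (xs!Suc k) ys \<and>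
           (\<Sum>j<Suc k. chain_turn (map z (ps j))) \<le> chain_turn (map z ys)"
  using assms(1)
proof (induction k)
  case 0
  then show ?case
    using ps by auto
next
  case (Suc k)
  then obtain ys where ys: "partition_of (xs!0) (xs!Suc k) ys"
    and turn: "(\<Sum>j<Suc k. chain_turn (map z (ps j))) \<le> chain_turn (map z ys)"
    by auto
  have next_part: "partition_of (xs!Suc k) (xs!Suc (Suc k)) (ps (Suc k))"
    using ps Suc.prems by simp
  have ys_ne: "ys \<noteq> []"
    using ys by (auto simp: partition_of_def)
  then have joint: "last (map z ys) # map z (tl (ps (Suc k))) = map z (ps (Suc k))"
    using ys next_part by (cases "ps (Suc k)") (auto simp: partition_of_def last_map)
  have "chain_turn (map z ys) + chain_turn (map z (ps (Suc k)))
      \<le> chain_turn (map z (ys @ tl (ps (Suc k))))"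
    using chain_turn_append_ge[of "map z ys" "map z (tl (ps (Suc k)))"] ys_ne by (simp add: joint)
  then show ?case
    using partition_of_append_tl[OF ys next_part] turn by (intro exI[of _ "ys @ tl (ps (Suc k))"]) auto
qed

lemma norm_scaled_diff_le:
  fixes a b :: complex and r s :: real
  assumes "0 \<le> r" "r \<le> 1" "0 \<le> s" "s \<le> 1" "cmod b \<le> 1"
  shows "cmod (of_real r * a - of_real s * b) \<le> cmod (a - b) + (1 - r) + (1 - s)"
proof -
  have "of_real r * a - of_real s * b = of_real r * (a - b) + of_real (r - s) * b"
    by (simp add: algebra_simps)
  then have "cmod (of_real r * a - of_real s * b) \<le> r * cmod (a - b) + \<bar>r - s\<bar> * cmod b"
    using norm_triangle_ineq[of "of_real r * (a - b)" "of_real (r - s) * b"] assms(1)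
    by (simp add: norm_mult del: of_real_diff)
  also have "\<dots> \<le> cmod (a - b) + \<bar>r - s\<bar>"
    using assms by (intro add_mono mult_left_le_one_le mult_left_le) auto
  finally show ?thesis
    using assms by linarith
qed

lemma sum_shift_le:
  fixes f :: "nat \<Rightarrow> real"
  assumes "\<And>k. k < m \<Longrightarrow> 0 \<le> f k"
  shows "(\<Sum>k\<in>{1..<m}. f (k - 1)) \<le> (\<Sum>k<m. f k)"
proof (cases m)
  case (Suc n)
  have "(\<Sum>k\<in>{1..<m}. f (k - 1)) = (\<Sum>k<n. f k)"
    unfolding Suc by (simp only: One_nat_def sum.shift_bounds_Suc_ivl) (simp add: lessThan_atLeast0)
  also have "\<dots> \<le> (\<Sum>k<m. f k)"
    using assms unfolding Suc by (intro sum_mono2) auto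
  finally show ?thesis .
qed simp

section \<open>Arcs parametrized by arc length\<close>

locale unit_speed_arc =
  fixes z :: "real \<Rightarrow> complex" and L R :: real
  assumes length_pos: "0 < L"
    and inj: "inj_on z {0..L}"
    and chord_le: "\<And>p q. 0 \<le> p \<Longrightarrow> p < q \<Longrightarrow> q \<le> L \<Longrightarrow> cmod (z q - z p) \<le> q - p"
    and length_approx: "\<And>p q e. 0 \<le> p \<Longrightarrow> p < q \<Longrightarrow> q \<le> L \<Longrightarrow> 0 < e \<Longrightarrow>
           \<exists>ps. partition_of p q ps \<and> q - p - e \<le> chain_length (map z ps)"
    and turn_bounded: "\<And>ps. partition_of 0 L ps \<Longrightarrow> chain_turn (map z ps) \<le> R"
begin

definition chord_ratio :: "real list \<Rightarrow> nat \<Rightarrow> real" where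
  "chord_ratio xs k = cmod (z (xs!Suc k) - z (xs!k)) / (xs!Suc k - xs!k)"

definition secant_velocity :: "real list \<Rightarrow> nat \<Rightarrow> complex" where
  "secant_velocity xs k = (z (xs!Suc k) - z (xs!k)) / of_real (xs!Suc k - xs!k)"

lemma chord_defect_le_turn:
  assumes pq: "0 \<le> p" "p < q" "q \<le> L" and e: "0 < e"
  shows "\<exists>ps. partition_of p q ps \<and> 1 - cmod (z q - z p) / (q - p) \<le> e + chain_turn (map z ps)"
proof -
  obtain ps where ps: "partition_of p q ps" and long: "q - p - e * (q - p) \<le> chain_length (map z ps)"
    using length_approx[OF pq, of "e * (q - p)"] e pq by auto
  obtain b r where ps_eq: "ps = p # b # r"
    using ps unfolding partition_of_def by (metis Suc_le_length_iff list.sel(1) numeral_2_eq_2)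
  have "p < b" "p \<in> {0..L}" "b \<in> {0..L}"
    using ps pq partition_of_bounds[OF ps, of b] by (auto simp: partition_of_def ps_eq)
  then have "z p \<noteq> z b"
    using inj by (metis inj_on_contraD less_irrefl)
  moreover have "last (map z ps) = z (last ps)"
    by (rule last_map) (simp add: ps_eq)
  then have "last (map z ps) = z q"
    using ps by (simp add: partition_of_def)
  ultimately have chord: "chain_length (map z ps) * (1 - chain_turn (map z ps)) \<le> cmod (z q - z p)"
    using chain_length_defect_le_chord[of "z p" "z b" "map z r"] by (simp add: ps_eq)
  define c where "c = chain_turn (map z ps)"
  have "1 - cmod (z q - z p) / (q - p) \<le> e + c"
  proof (cases "1 \<le> c")
    case True
    have "0 \<le> cmod (z q - z p) / (q - p)"
      using pq by simp
    then show ?thesis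
      using True e by linarith
  next
    case False
    then have "(q - p) * ((1 - e) * (1 - c)) \<le> cmod (z q - z p)"
      using chord long mult_right_mono[OF long, of "1 - c"] by (simp add: c_def algebra_simps)
    then have "(1 - e) * (1 - c) \<le> cmod (z q - z p) / (q - p)"
      using pq by (simp add: le_divide_eq mult.commute)
    moreover have "1 - e - c \<le> (1 - e) * (1 - c)"
      using e chain_turn_nonneg[of "map z ps"] by (simp add: c_def algebra_simps)
    ultimately show ?thesis
      by linarith
  qed
  then show ?thesis
    using ps by (auto simp: c_def)
qed

lemma partition_of_nodes:
  assumes "partition_of 0 L xs" "k < length xs - 1"
  shows "0 \<le> xs!k" "xs!k < xs!Suc k" "xs!Suc k \<le> L"
  using assms partition_of_nth_bounds[OF assms(1), of k] partition_of_nth_bounds[OF assms(1), of "Suc k"]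
  by (auto simp: partition_of_def sorted_wrt_nth_less)

lemma chord_ratio_bounds:
  assumes "partition_of 0 L xs" "k < length xs - 1"
  shows "0 \<le> chord_ratio xs k" "chord_ratio xs k \<le> 1"
  using partition_of_nodes[OF assms] chord_le by (auto simp: chord_ratio_def divide_le_eq)

lemma sum_chord_defect_le:
  assumes xs: "partition_of 0 L xs"
  shows "(\<Sum>k<length xs - 1. 1 - chord_ratio xs k) \<le> R"
proof (rule field_le_epsilon)
  fix e :: real assume e: "0 < e"
  define m where "m = length xs - 1"
  have m: "1 \<le> m"
    using xs by (auto simp: partition_of_def m_def)
  have "\<forall>k<m. \<exists>ps. partition_of (xs!k) (xs!Suc k) ps \<and> 1 - chord_ratio xs k \<le> e / m + chain_turn (map z ps)"
    using partition_of_nodes[OF xs] chord_defect_le_turn e m unfolding chord_ratio_def m_def by simp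
  then obtain ps where ps: "\<And>k. k < m \<Longrightarrow> partition_of (xs!k) (xs!Suc k) (ps k)"
    and defect: "\<And>k. k < m \<Longrightarrow> 1 - chord_ratio xs k \<le> e / m + chain_turn (map z (ps k))"
    by metis
  obtain ys where ys: "partition_of (xs!0) (xs!m) ys"
    and turn: "(\<Sum>k<m. chain_turn (map z (ps k))) \<le> chain_turn (map z ys)"
    using chain_turn_concat_partitions[of "m - 1" m xs ps z, OF _ ps] m by auto
  have "(\<Sum>k<m. 1 - chord_ratio xs k) \<le> (\<Sum>k<m. e / m + chain_turn (map z (ps k)))"
    using defect by (intro sum_mono) auto
  also have "\<dots> = e + (\<Sum>k<m. chain_turn (map z (ps k)))"
    using m by (simp add: sum.distrib)
  also have "\<dots> \<le> e + R"
    using turn turn_bounded[of ys] ys partition_of_nth[OF xs] by (simp add: m_def)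
  finally show "(\<Sum>k<length xs - 1. 1 - chord_ratio xs k) \<le> R + e"
    by (simp add: m_def)
qed

lemma secant_velocity_eq:
  assumes "partition_of 0 L xs" "k < length xs - 1"
  shows "secant_velocity xs k = of_real (chord_ratio xs k) * sgn (z (xs!Suc k) - z (xs!k))"
  using partition_of_nodes[OF assms]
  by (cases "z (xs!Suc k) = z (xs!k)")
    (simp_all add: secant_velocity_def chord_ratio_def sgn_div_norm scaleR_conv_of_real field_simps)

lemma secant_velocity_variation_le:
  assumes xs: "partition_of 0 L xs"
  shows "(\<Sum>k\<in>{1..<length xs - 1}. cmod (secant_velocity xs k - secant_velocity xs (k - 1))) \<le> 3 * R"
proof -
  define m where "m = length xs - 1"
  define u where "u k = z (xs!Suc k) - z (xs!k)" for k
  define r where "r = chord_ratio xs"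
  have r: "0 \<le> r k" "r k \<le> 1" if "k < m" for k
    using chord_ratio_bounds[OF xs] that by (auto simp: r_def m_def)
  have jump: "cmod (secant_velocity xs k - secant_velocity xs (k - 1))
      \<le> cmod (sgn (u k) - sgn (u (k - 1))) + (1 - r k) + (1 - r (k - 1))" if "k \<in> {1..<m}" for k
  proof -
    have k: "k < m" "k - 1 < m" "Suc (k - 1) = k"
      using that by auto
    then have "secant_velocity xs k - secant_velocity xs (k - 1)
        = of_real (r k) * sgn (u k) - of_real (r (k - 1)) * sgn (u (k - 1))"
      using secant_velocity_eq[OF xs] by (simp add: m_def u_def r_def)
    also have "cmod \<dots> \<le> cmod (sgn (u k) - sgn (u (k - 1))) + (1 - r k) + (1 - r (k - 1))"
      using r[OF k(1)] r[OF k(2)] by (intro norm_scaled_diff_le) (auto simp: norm_sgn)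
    finally show ?thesis .
  qed
  have "(\<Sum>k\<in>{1..<m}. cmod (sgn (u k) - sgn (u (k - 1)))) = chain_turn (map z xs)"
    unfolding chain_turn_conv_sum by (intro sum.cong) (auto simp: m_def u_def)
  also have "\<dots> \<le> R"
    using turn_bounded[OF xs] .
  finally have turn: "(\<Sum>k\<in>{1..<m}. cmod (sgn (u k) - sgn (u (k - 1)))) \<le> R" .
  have "(\<Sum>k\<in>{1..<m}. 1 - r k) \<le> (\<Sum>k<m. 1 - r k)"
    using r by (intro sum_mono2) auto
  then have defect: "(\<Sum>k\<in>{1..<m}. 1 - r k) \<le> R"
    using sum_chord_defect_le[OF xs] by (simp add: r_def m_def)
  have "(\<Sum>k\<in>{1..<m}. 1 - r (k - 1)) \<le> (\<Sum>k<m. 1 - r k)"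
    using r by (intro sum_shift_le) auto
  then have defect_shifted: "(\<Sum>k\<in>{1..<m}. 1 - r (k - 1)) \<le> R"
    using sum_chord_defect_le[OF xs] by (simp add: r_def m_def)
  have "(\<Sum>k\<in>{1..<m}. cmod (secant_velocity xs k - secant_velocity xs (k - 1)))
      \<le> (\<Sum>k\<in>{1..<m}. cmod (sgn (u k) - sgn (u (k - 1))) + (1 - r k) + (1 - r (k - 1)))"
    using jump by (rule sum_mono)
  also have "\<dots> \<le> 3 * R"
    using turn defect defect_shifted by (simp only: sum.distrib)
  finally show ?thesis
    by (simp add: m_def)
qed

lemma slope_variation_Re_le:
  assumes "partition_of 0 L xs"
  shows "slope_variation (\<lambda>t. Re (z t)) xs \<le> 3 * R"
proof -
  have jump_eq: "slope_jump (\<lambda>t. Re (z t)) xs k = Re (secant_velocity xs k - secant_velocity xs (k - 1))" for k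
    by (simp add: slope_jump_def secant_slope_def secant_velocity_def flip: of_real_diff)
  have "slope_variation (\<lambda>t. Re (z t)) xs
      \<le> (\<Sum>k\<in>{1..<length xs - 1}. cmod (secant_velocity xs k - secant_velocity xs (k - 1)))"
    unfolding slope_variation_def jump_eq by (intro sum_mono) (rule abs_Re_le_cmod)
  then show ?thesis
    using secant_velocity_variation_le[OF assms] by linarith
qed

lemma slope_variation_Im_le:
  assumes "partition_of 0 L xs"
  shows "slope_variation (\<lambda>t. Im (z t)) xs \<le> 3 * R"
proof -
  have jump_eq: "slope_jump (\<lambda>t. Im (z t)) xs k = Im (secant_velocity xs k - secant_velocity xs (k - 1))" for k
    by (simp add: slope_jump_def secant_slope_def secant_velocity_def flip: of_real_diff)
  have "slope_variation (\<lambda>t. Im (z t)) xs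
      \<le> (\<Sum>k\<in>{1..<length xs - 1}. cmod (secant_velocity xs k - secant_velocity xs (k - 1)))"
    unfolding slope_variation_def jump_eq by (intro sum_mono) (rule abs_Im_le_cmod)
  then show ?thesis
    using secant_velocity_variation_le[OF assms] by linarith
qed

end

lemma strict_mono_on_onto_interval_endpoints:
  fixes \<phi> :: "real \<Rightarrow> real"
  assumes mono: "strict_mono_on {c..d} \<phi>" and onto: "\<phi> ` {c..d} = {a..b}" and ab: "a < b"
  shows "c < d" "\<phi> c = a" "\<phi> d = b"
proof -
  show cd: "c < d"
  proof (rule ccontr)
    assume "\<not> c < d"
    then have "{c..d} \<subseteq> {c}"
      by auto
    then have "{a..b} \<subseteq> {\<phi> c}"
      using onto by (metis image_empty image_insert image_mono)
    then have "a = \<phi> c" "b = \<phi> c"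
      using ab by (meson atLeastAtMost_iff less_imp_le order_refl singletonD subsetD)+
    then show False
      using ab by simp
  qed
  obtain s s' where s: "s \<in> {c..d}" "\<phi> s = a" and s': "s' \<in> {c..d}" "\<phi> s' = b"
    using onto ab by (metis atLeastAtMost_iff imageE order.refl less_imp_le)
  have "\<phi> c \<le> \<phi> s" "\<phi> s' \<le> \<phi> d"
    using s s' cd by (auto intro!: strict_mono_on_leD[OF mono])
  moreover have "\<phi> c \<in> {a..b}" "\<phi> d \<in> {a..b}"
    using onto cd by auto
  ultimately show "\<phi> c = a" "\<phi> d = b"
    using s s' by auto
qed

lemma inscribed_params_imp_partition_of:
  assumes "inscribed_params p q t n"
  shows "partition_of p q (map t [0..<Suc n])"
  using assms by (auto simp: partition_of_iff_nth inscribed_params_def sorted_wrt_iff_nth_Suc_transp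
    simp del: upt_Suc)

lemma broken_line_length_le_arc_len:
  "inscribed_params p q t n \<Longrightarrow> ereal (broken_line_length z t n) \<le> arc_len z p q"
  unfolding arc_len_def by (rule SUP_upper2[of "(t, n)"]) auto

lemma broken_line_rotation_le_abs_curvature:
  "inscribed_params a b t n \<Longrightarrow> ereal (broken_line_rotation \<gamma> t n) \<le> abs_curvature \<gamma> a b"
  unfolding abs_curvature_def by (rule SUP_upper2[of "(t, n)"]) auto

lemma abs_curvature_finite:
  assumes "a < b" "bounded_rotation \<gamma> a b"
  obtains R where "abs_curvature \<gamma> a b = ereal R"
proof -
  have "inscribed_params a b (\<lambda>i. if i = 0 then a else b) 1"
    using assms(1) by (simp add: inscribed_params_def)
  then have "ereal (broken_line_rotation \<gamma> (\<lambda>i. if i = 0 then a else b) 1) \<le> abs_curvature \<gamma> a b"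
    by (rule broken_line_rotation_le_abs_curvature)
  then have "abs_curvature \<gamma> a b \<noteq> - \<infinity>"
    by auto
  moreover have "abs_curvature \<gamma> a b \<noteq> \<infinity>"
    using assms(2) by (simp add: bounded_rotation_def)
  ultimately show ?thesis
    using that by (cases "abs_curvature \<gamma> a b") auto
qed

lemma chord_le_arc_len:
  assumes "p < q" "arc_len z p q = ereal l"
  shows "cmod (z q - z p) \<le> l"
proof -
  have "inscribed_params p q (\<lambda>i. if i = 0 then p else q) 1"
    using assms(1) by (simp add: inscribed_params_def)
  then have "ereal (broken_line_length z (\<lambda>i. if i = 0 then p else q) 1) \<le> ereal l"
    using broken_line_length_le_arc_len assms(2) by metis
  then show ?thesis
    by (simp add: broken_line_length_def)
qed

lemma arc_len_approx_by_chain: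
  assumes "arc_len z p q = ereal l" "0 < e"
  shows "\<exists>ps. partition_of p q ps \<and> l - e \<le> chain_length (map z ps)"
proof -
  have "ereal (l - e) < arc_len z p q"
    using assms by simp
  then obtain t n where ins: "inscribed_params p q t n" and "l - e < broken_line_length z t n"
    unfolding arc_len_def less_SUP_iff by auto
  moreover have "broken_line_length z t n = chain_length (map z (map t [0..<Suc n]))"
    unfolding chain_length_conv_sum broken_line_length_def by (intro sum.cong) (auto simp del: upt_Suc)
  ultimately show ?thesis
    using inscribed_params_imp_partition_of[OF ins] by (intro exI[of _ "map t [0..<Suc n]"]) auto
qed

lemma chain_turn_le_abs_curvature:
  assumes mono: "strict_mono_on {0..L} \<phi>" and ends: "\<phi> 0 = a" "\<phi> L = b"
    and z: "\<forall>t\<in>{0..L}. z t = \<gamma> (\<phi> t)" and ps: "partition_of 0 L ps"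
  shows "ereal (chain_turn (map z ps)) \<le> abs_curvature \<gamma> a b"
proof -
  define n where "n = length ps - 1"
  have nodes: "ps!i \<in> {0..L}" if "i \<le> n" for i
    using partition_of_nth_bounds[OF ps, of i] that ps by (auto simp: n_def partition_of_def)
  have "inscribed_params a b (\<lambda>i. \<phi> (ps!i)) n"
    unfolding inscribed_params_def
  proof (intro conjI allI impI)
    show "1 \<le> n"
      using ps by (auto simp: partition_of_def n_def)
    show "\<phi> (ps!0) = a" "\<phi> (ps!n) = b"
      using partition_of_nth[OF ps] ends by (simp_all add: n_def)
    show "\<phi> (ps!i) < \<phi> (ps!Suc i)" if "i < n" for i
      using that nodes[of i] nodes[of "Suc i"] ps
      by (intro strict_mono_onD[OF mono]) (auto simp: partition_of_def n_def sorted_wrt_nth_less)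
  qed
  then have "ereal (broken_line_rotation \<gamma> (\<lambda>i. \<phi> (ps!i)) n) \<le> abs_curvature \<gamma> a b"
    by (rule broken_line_rotation_le_abs_curvature)
  moreover have "broken_line_rotation z (\<lambda>i. ps!i) n = broken_line_rotation \<gamma> (\<lambda>i. \<phi> (ps!i)) n"
    unfolding broken_line_rotation_def using nodes z by (intro sum.cong) auto
  ultimately show ?thesis
    using chain_turn_le_broken_line_rotation[of z ps] by (metis ereal_less_eq(3) n_def order_trans)
qed

lemma unit_speed_arc_of_reparametrization:
  assumes arc: "is_arc \<gamma> a b" and R: "abs_curvature \<gamma> a b = ereal R"
    and mono: "strict_mono_on {0..L} \<phi>" and onto: "\<phi> ` {0..L} = {a..b}"
    and z: "\<forall>t\<in>{0..L}. z t = \<gamma> (\<phi> t)"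
    and arclength: "\<forall>t1\<in>{0..L}. \<forall>t2\<in>{0..L}. t1 < t2 \<longrightarrow> arc_len z t1 t2 = ereal (t2 - t1)"
  shows "unit_speed_arc z L R"
proof
  have ab: "a < b" and \<gamma>_inj: "inj_on \<gamma> {a..b}"
    using arc by (auto simp: is_arc_def)
  note ends = strict_mono_on_onto_interval_endpoints[OF mono onto ab]
  show "0 < L"
    using ends(1) .
  have "inj_on (\<gamma> \<circ> \<phi>) {0..L}"
    by (rule comp_inj_on[OF strict_mono_on_imp_inj_on[OF mono]]) (simp add: onto \<gamma>_inj)
  moreover have "inj_on z {0..L} = inj_on (\<gamma> \<circ> \<phi>) {0..L}"
    using z by (intro inj_on_cong) auto
  ultimately show "inj_on z {0..L}"
    by simp
  show "cmod (z q - z p) \<le> q - p" if "0 \<le> p" "p < q" "q \<le> L" for p q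
  proof -
    have "arc_len z p q = ereal (q - p)"
      using arclength that by simp
    then show ?thesis
      using chord_le_arc_len that(2) by blast
  qed
  show "\<exists>ps. partition_of p q ps \<and> q - p - e \<le> chain_length (map z ps)"
    if "0 \<le> p" "p < q" "q \<le> L" "0 < e" for p q e
  proof -
    have "arc_len z p q = ereal (q - p)"
      using arclength that by simp
    then show ?thesis
      using arc_len_approx_by_chain that(4) by blast
  qed
  show "chain_turn (map z ps) \<le> R" if "partition_of 0 L ps" for ps
    using chain_turn_le_abs_curvature[OF mono ends(2,3) z that] R by simp
qed

theorem proposition2p10:
  fixes \<gamma> z :: "real \<Rightarrow> complex" and a b L :: real and \<phi> :: "real \<Rightarrow> real"
  assumes arc: "is_arc \<gamma> a b"
    and rot: "bounded_rotation \<gamma> a b"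
    and len: "arc_len \<gamma> a b = ereal L"
    and reparam: "strict_mono_on {0..L} \<phi>" "continuous_on {0..L} \<phi>" "\<phi> ` {0..L} = {a..b}"
    and z_def: "\<forall>t\<in>{0..L}. z t = \<gamma> (\<phi> t)"
    and arclength: "\<forall>t1\<in>{0..L}. \<forall>t2\<in>{0..L}. t1 < t2 \<longrightarrow> arc_len z t1 t2 = ereal (t2 - t1)"
  shows "\<exists>g1 f1 g2 f2 :: real \<Rightarrow> real.
           continuous_on {0..L} g1 \<and> convex_on {0..L} g1 \<and>
           continuous_on {0..L} f1 \<and> convex_on {0..L} f1 \<and>
           continuous_on {0..L} g2 \<and> convex_on {0..L} g2 \<and>
           continuous_on {0..L} f2 \<and> convex_on {0..L} f2 \<and>
           (\<forall>t\<in>{0..L}. Re (z t) = g1 t - f1 t \<and> Im (z t) = g2 t - f2 t)"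
proof -
  have ab: "a < b" and \<gamma>_cont: "continuous_on {a..b} \<gamma>"
    using arc by (auto simp: is_arc_def)
  obtain R where R: "abs_curvature \<gamma> a b = ereal R"
    using abs_curvature_finite[OF ab rot] .
  interpret unit_speed_arc z L R
    using unit_speed_arc_of_reparametrization[OF arc R reparam(1,3) z_def arclength] .
  have "continuous_on {0..L} (\<gamma> \<circ> \<phi>)"
    using reparam(2,3) \<gamma>_cont by (intro continuous_on_compose) auto
  moreover have "continuous_on {0..L} z = continuous_on {0..L} (\<gamma> \<circ> \<phi>)"
    using z_def by (intro continuous_on_cong) auto
  ultimately have z_cont: "continuous_on {0..L} z"
    by simp
  have Re_cont: "continuous_on {0..L} (\<lambda>t. Re (z t))" and Im_cont: "continuous_on {0..L} (\<lambda>t. Im (z t))"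
    using z_cont by (auto intro: continuous_intros)
  obtain g1 f1 where Re:
      "continuous_on {0..L} g1" "convex_on {0..L} g1" "continuous_on {0..L} f1" "convex_on {0..L} f1"
      "\<And>t. Re (z t) = g1 t - f1 t"
    using delta_convex_if_bounded_slope_variation[OF length_pos Re_cont slope_variation_Re_le] by blast
  obtain g2 f2 where Im:
      "continuous_on {0..L} g2" "convex_on {0..L} g2" "continuous_on {0..L} f2" "convex_on {0..L} f2"
      "\<And>t. Im (z t) = g2 t - f2 t"
    using delta_convex_if_bounded_slope_variation[OF length_pos Im_cont slope_variation_Im_le] by blast
  show ?thesis
    using Re Im by (intro exI[of _ g1] exI[of _ f1] exI[of _ g2] exI[of _ f2]) simp
qed

end
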